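(* Consider a two-asset G3M with fee parameter $\gamma\in(0,1)$ and a reference price process $(S_t)_{t\ge 0}$, $S_t>0$. Arbitrageurs arrive at deterministic times $0=\tau_0<\tau_1<\dots<\tau_m\le T$. The pool price $P_t>0$ is constant on each interval $[\tau_i,\tau_{i+1})$ (and on $[\tau_m,\infty)$), and at each arrival time it is updated so that, writing $Z_t=\ln(S_t/P_t)$ and $Z_{\tau_i^-}:=\ln S_{\tau_i}-\ln P_{\tau_{i-1}}$ for $i\ge1$ (and $Z_{0^-}:=\ln S_0-\ln P_0$), $$Z_{\tau_i}=\max\{\min\{Z_{\tau_i^-},-\ln\gamma\},\ln\gamma\}.$$ Assume $\gamma P_0\le S_0\le\gamma^{-1}P_0$. Define $$J_i=\max\{\min\{Z_{\tau_i^-},-\ln\gamma\},\ln\gamma\}-Z_{\tau_i^-},\quad L_t=\sum_{i:\tau_i\le t}\{J_i\}^+,\quad U_t=\sum_{i:\tau_i\le t}\{J_i\}^-,$$ where $\{a\}^+=\max\{a,0\}$ and $\{a\}^-=\max\{-a,0\}$. Then for all $t\ge0$, $$\ln P_t=\ln P_0+U_t-L_t,\qquad Z_t=\ln S_t-\ln P_0+L_t-U_t,$$ and moreover $$L_t=\sup_{i:\tau_i\le t}\big(-\ln(\gamma P_0)+\ln S_{\tau_i}-U_{\tau_i}\big)^-,\qquad U_t=\sup_{i:\tau_i\le t}\big(\ln(\gamma^{-1}P_0)-\ln S_{\tau_i}-L_{\tau_i}\big)^-,$$ where $(a)^-=\max\{-a,0\}$.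
   Context: Setting: a G3M (geometric mean market maker) pool for assets $X,Y$ with proportional fee $1-\gamma$; $P_t$ is the pool price of $X$ in units of $Y$, $S_t$ the price of $X$ in units of $Y$ on a frictionless external reference market with infinite liquidity. There are no noise traders, so the pool price changes only at arbitrageur arrival times, where arbitrageurs trade just enough to bring the mispricing $Z=\ln(S/P)$ back into the no-arbitrage interval $[\ln\gamma,-\ln\gamma]$ (and do nothing if it is already inside), as encoded in the update rule above. *)

theory Defs
  imports Complex_Main
begin

definition pos_part :: "real \<Rightarrow> real" where
  "pos_part a = max a 0"

definition neg_part :: "real \<Rightarrow> real" where
  "neg_part a = max (- a) 0"

definition clampg :: "real \<Rightarrow> real \<Rightarrow> real" where
  "clampg \<gamma> z = max (min z (- ln \<gamma>)) (ln \<gamma>)"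

definition Zpre :: "(real \<Rightarrow> real) \<Rightarrow> (real \<Rightarrow> real) \<Rightarrow> (nat \<Rightarrow> real) \<Rightarrow> nat \<Rightarrow> real" where
  "Zpre S P \<tau> i = (if i = 0 then ln (S 0) - ln (P 0) else ln (S (\<tau> i)) - ln (P (\<tau> (i - 1))))"

definition Jump :: "real \<Rightarrow> (real \<Rightarrow> real) \<Rightarrow> (real \<Rightarrow> real) \<Rightarrow> (nat \<Rightarrow> real) \<Rightarrow> nat \<Rightarrow> real" where
  "Jump \<gamma> S P \<tau> i = clampg \<gamma> (Zpre S P \<tau> i) - Zpre S P \<tau> i"

definition arrived :: "nat \<Rightarrow> (nat \<Rightarrow> real) \<Rightarrow> real \<Rightarrow> nat set" where
  "arrived m \<tau> t = {i. i \<le> m \<and> \<tau> i \<le> t}"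

definition Lproc :: "real \<Rightarrow> (real \<Rightarrow> real) \<Rightarrow> (real \<Rightarrow> real) \<Rightarrow> nat \<Rightarrow> (nat \<Rightarrow> real) \<Rightarrow> real \<Rightarrow> real" where
  "Lproc \<gamma> S P m \<tau> t = (\<Sum>i\<in>arrived m \<tau> t. pos_part (Jump \<gamma> S P \<tau> i))"

definition Uproc :: "real \<Rightarrow> (real \<Rightarrow> real) \<Rightarrow> (real \<Rightarrow> real) \<Rightarrow> nat \<Rightarrow> (nat \<Rightarrow> real) \<Rightarrow> real \<Rightarrow> real" where
  "Uproc \<gamma> S P m \<tau> t = (\<Sum>i\<in>arrived m \<tau> t. neg_part (Jump \<gamma> S P \<tau> i))"

end

theory Submission
  imports Defs
begin

text \<open>
  At the arrival times the jumps J telescope, so ln P = ln P_0 + U - L, and the path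
  ln S + L - U = ln P_0 + Z stays in [ln (\<gamma> P_0), ln (P_0 / \<gamma>)], with L increasing only when
  the path sits at the lower end and U only when it sits at the upper end. Thus (L, U) solves a
  discrete two-sided Skorokhod problem, and L_k is the largest deficit
  max (ln (\<gamma> P_0) - ln S_i + U_i) 0 over i \<le> k: each deficit is at most L_i \<le> L_k, and the
  last increase of L attains L_k. U is the mirror image.
\<close>

definition cum_pos :: "(nat \<Rightarrow> real) \<Rightarrow> nat \<Rightarrow> real" where
  "cum_pos J k = (\<Sum>j\<le>k. pos_part (J j))"

definition cum_neg :: "(nat \<Rightarrow> real) \<Rightarrow> nat \<Rightarrow> real" where
  "cum_neg J k = (\<Sum>j\<le>k. neg_part (J j))"

lemma cum_pos_0 [simp]: "cum_pos J 0 = pos_part (J 0)"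
  by (simp add: cum_pos_def)

lemma cum_pos_Suc [simp]: "cum_pos J (Suc k) = cum_pos J k + pos_part (J (Suc k))"
  by (simp add: cum_pos_def)

lemma cum_pos_nonneg: "0 \<le> cum_pos J k"
  unfolding cum_pos_def pos_part_def by (intro sum_nonneg) simp

lemma cum_pos_mono: "i \<le> k \<Longrightarrow> cum_pos J i \<le> cum_pos J k"
  unfolding cum_pos_def pos_part_def by (intro sum_mono2) auto

lemma cum_pos_uminus: "cum_pos (\<lambda>i. - J i) = cum_neg J"
  by (simp add: fun_eq_iff cum_pos_def cum_neg_def pos_part_def neg_part_def)

lemma cum_neg_uminus: "cum_neg (\<lambda>i. - J i) = cum_pos J"
  by (simp add: fun_eq_iff cum_pos_def cum_neg_def pos_part_def neg_part_def)

lemma cum_pos_minus_cum_neg: "cum_pos J k - cum_neg J k = (\<Sum>j\<le>k. J j)"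
  unfolding cum_pos_def cum_neg_def sum_subtractf[symmetric]
  by (intro sum.cong) (auto simp: pos_part_def neg_part_def)

lemma cum_pos_last_increase:
  "cum_pos J k = 0 \<or> (\<exists>j\<le>k. 0 < J j \<and> cum_pos J k = cum_pos J j)"
proof (induction k)
  case 0
  show ?case by (auto simp: pos_part_def)
next
  case (Suc k)
  show ?case
  proof (cases "0 < J (Suc k)")
    case False
    then have "cum_pos J (Suc k) = cum_pos J k" by (simp add: pos_part_def)
    with Suc.IH show ?thesis using le_SucI by metis
  qed blast
qed

lemma cum_pos_eq_SUP_reflection:
  fixes x :: "nat \<Rightarrow> real"
  assumes above: "\<And>i. i \<le> k \<Longrightarrow> lo \<le> x i + cum_pos J i - cum_neg J i"
    and at_lo: "\<And>i. i \<le> k \<Longrightarrow> 0 < J i \<Longrightarrow> x i + cum_pos J i - cum_neg J i = lo"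
  shows "cum_pos J k = (SUP i\<in>{..k}. neg_part (- lo + x i - cum_neg J i))"
proof (rule cSup_eq_maximum[symmetric])
  have deficit_le: "neg_part (- lo + x i - cum_neg J i) \<le> cum_pos J k" if "i \<le> k" for i
    using above[OF that] cum_pos_mono[OF that, of J] cum_pos_nonneg[of J k]
    by (simp add: neg_part_def)
  then show "y \<le> cum_pos J k" if "y \<in> (\<lambda>i. neg_part (- lo + x i - cum_neg J i)) ` {..k}" for y
    using that by auto
  have "\<exists>i\<le>k. neg_part (- lo + x i - cum_neg J i) = cum_pos J k"
    using cum_pos_last_increase[of J k]
  proof
    assume "cum_pos J k = 0"
    then show ?thesis
      using deficit_le[of 0] by (auto simp: neg_part_def)
  next
    assume "\<exists>j\<le>k. 0 < J j \<and> cum_pos J k = cum_pos J j"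
    then obtain j where "j \<le> k" "0 < J j" "cum_pos J k = cum_pos J j" by blast
    then show ?thesis
      using at_lo[of j] cum_pos_nonneg[of J j] by (auto simp: neg_part_def)
  qed
  then show "cum_pos J k \<in> (\<lambda>i. neg_part (- lo + x i - cum_neg J i)) ` {..k}"
    by force
qed

lemma cum_neg_eq_SUP_reflection:
  fixes x :: "nat \<Rightarrow> real"
  assumes below: "\<And>i. i \<le> k \<Longrightarrow> x i + cum_pos J i - cum_neg J i \<le> hi"
    and at_hi: "\<And>i. i \<le> k \<Longrightarrow> J i < 0 \<Longrightarrow> x i + cum_pos J i - cum_neg J i = hi"
  shows "cum_neg J k = (SUP i\<in>{..k}. neg_part (hi - x i - cum_pos J i))"
proof -
  have "cum_pos (\<lambda>i. - J i) k
      = (SUP i\<in>{..k}. neg_part (- (- hi) + - x i - cum_neg (\<lambda>i. - J i) i))"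
    by (rule cum_pos_eq_SUP_reflection)
      (use below at_hi in \<open>force simp: cum_pos_uminus cum_neg_uminus\<close>)+
  then show ?thesis
    by (simp add: cum_pos_uminus cum_neg_uminus)
qed

lemma clampg_bounds:
  assumes "0 < \<gamma>" "\<gamma> \<le> 1"
  shows "ln \<gamma> \<le> clampg \<gamma> z \<and> clampg \<gamma> z \<le> - ln \<gamma>"
  using assms by (simp add: clampg_def)

lemma clampg_eq_lower: "z < clampg \<gamma> z \<Longrightarrow> clampg \<gamma> z = ln \<gamma>"
  by (auto simp: clampg_def)

lemma clampg_eq_upper:
  assumes "0 < \<gamma>" "\<gamma> \<le> 1" "clampg \<gamma> z < z"
  shows "clampg \<gamma> z = - ln \<gamma>"
  using assms by (auto simp: clampg_def)

lemma last_arrival_exists: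
  fixes \<tau> :: "nat \<Rightarrow> real"
  assumes "\<tau> 0 \<le> t"
  obtains k where "k \<le> m" "\<tau> k \<le> t" "k < m \<Longrightarrow> t < \<tau> (Suc k)"
proof (induction m arbitrary: thesis)
  case 0
  then show ?case using assms by blast
next
  case (Suc m)
  obtain k where k: "k \<le> m" "\<tau> k \<le> t" "k < m \<Longrightarrow> t < \<tau> (Suc k)"
    using Suc.IH by blast
  show ?case
  proof (cases "k = m \<and> \<tau> (Suc m) \<le> t")
    case True
    then show ?thesis using Suc.prems[of "Suc m"] by blast
  next
    case False
    then have "k < Suc m \<Longrightarrow> t < \<tau> (Suc k)"
      using k by (cases "k = m") auto
    with k show ?thesis by (intro Suc.prems) auto
  qed
qed

lemma arrived_eq_atMost:
  fixes \<tau> :: "nat \<Rightarrow> real"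
  assumes mono: "\<forall>i<m. \<tau> i < \<tau> (Suc i)"
    and k: "k \<le> m" "\<tau> k \<le> t" "k < m \<Longrightarrow> t < \<tau> (Suc k)"
  shows "arrived m \<tau> t = {..k}"
proof -
  have le: "\<tau> i \<le> \<tau> j" if "i \<le> j" "j \<le> m" for i j
    by (rule lift_Suc_mono_le_ivl[of "{..<m}"]) (use mono that in auto)
  have "\<tau> j \<le> t \<longleftrightarrow> j \<le> k" if "j \<le> m" for j
  proof
    assume "j \<le> k"
    with le[of j k] k show "\<tau> j \<le> t" by linarith
  next
    assume "\<tau> j \<le> t"
    show "j \<le> k"
    proof (rule ccontr)
      assume "\<not> j \<le> k"
      with that have "k < m" by simp
      moreover have "\<tau> (Suc k) \<le> \<tau> j"
        using \<open>\<not> j \<le> k\<close> that by (intro le) auto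
      ultimately show False
        using k(3) \<open>\<tau> j \<le> t\<close> by fastforce
    qed
  qed
  then show ?thesis
    using k(1) by (auto simp: arrived_def)
qed

locale arbitraged_pool =
  fixes \<gamma> :: real and S P :: "real \<Rightarrow> real" and \<tau> :: "nat \<Rightarrow> real" and m :: nat
  assumes gamma_pos: "0 < \<gamma>" and gamma_le_1: "\<gamma> \<le> 1"
    and P0_pos: "0 < P 0"
    and tau0: "\<tau> 0 = 0"
    and update: "\<And>i. i \<le> m \<Longrightarrow> ln (S (\<tau> i)) - ln (P (\<tau> i)) = clampg \<gamma> (Zpre S P \<tau> i)"
begin

abbreviation jumps :: "nat \<Rightarrow> real" where
  "jumps \<equiv> Jump \<gamma> S P \<tau>"

lemma jumps_0: "jumps 0 = 0"
  using update[of 0] tau0 by (simp add: Jump_def Zpre_def)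

lemma jumps_Suc: "Suc i \<le> m \<Longrightarrow> jumps (Suc i) = ln (P (\<tau> i)) - ln (P (\<tau> (Suc i)))"
  using update[of "Suc i"] by (simp add: Jump_def Zpre_def)

lemma ln_P_arrival:
  assumes "i \<le> m"
  shows "ln (P (\<tau> i)) = ln (P 0) + cum_neg jumps i - cum_pos jumps i"
proof -
  have "cum_pos jumps i - cum_neg jumps i = (\<Sum>j<Suc i. jumps j)"
    by (simp add: cum_pos_minus_cum_neg lessThan_Suc_atMost)
  also have "\<dots> = (\<Sum>j<i. jumps (Suc j))"
    unfolding sum.lessThan_Suc_shift by (simp add: jumps_0)
  also have "\<dots> = (\<Sum>j<i. ln (P (\<tau> j)) - ln (P (\<tau> (Suc j))))"
    using assms by (intro sum.cong) (auto simp: jumps_Suc)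
  also have "\<dots> = ln (P 0) - ln (P (\<tau> i))"
    using sum_lessThan_telescope'[of "\<lambda>j. ln (P (\<tau> j))" i] by (simp add: tau0)
  finally show ?thesis by simp
qed

lemma reflected_arrival:
  "i \<le> m \<Longrightarrow>
    ln (S (\<tau> i)) + cum_pos jumps i - cum_neg jumps i = ln (P 0) + clampg \<gamma> (Zpre S P \<tau> i)"
  using ln_P_arrival update by fastforce

lemma reflected_arrival_bounds:
  assumes "i \<le> m"
  shows "ln (\<gamma> * P 0) \<le> ln (S (\<tau> i)) + cum_pos jumps i - cum_neg jumps i"
    and "ln (S (\<tau> i)) + cum_pos jumps i - cum_neg jumps i \<le> ln (P 0 / \<gamma>)"
  using reflected_arrival[OF assms] clampg_bounds[OF gamma_pos gamma_le_1]
    gamma_pos P0_pos by (simp_all add: ln_mult ln_div)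

lemma reflected_arrival_at_lower:
  assumes "i \<le> m" "0 < jumps i"
  shows "ln (S (\<tau> i)) + cum_pos jumps i - cum_neg jumps i = ln (\<gamma> * P 0)"
proof -
  have "clampg \<gamma> (Zpre S P \<tau> i) = ln \<gamma>"
    using assms(2) by (intro clampg_eq_lower) (simp add: Jump_def)
  then show ?thesis
    using reflected_arrival[OF assms(1)] gamma_pos P0_pos by (simp add: ln_mult)
qed

lemma reflected_arrival_at_upper:
  assumes "i \<le> m" "jumps i < 0"
  shows "ln (S (\<tau> i)) + cum_pos jumps i - cum_neg jumps i = ln (P 0 / \<gamma>)"
proof -
  have "clampg \<gamma> (Zpre S P \<tau> i) = - ln \<gamma>"
    using assms(2) by (intro clampg_eq_upper gamma_pos gamma_le_1) (simp add: Jump_def)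
  then show ?thesis
    using reflected_arrival[OF assms(1)] gamma_pos P0_pos by (simp add: ln_div)
qed

lemma cum_pos_jumps_eq_SUP:
  "k \<le> m \<Longrightarrow> cum_pos jumps k
    = (SUP i\<in>{..k}. neg_part (- ln (\<gamma> * P 0) + ln (S (\<tau> i)) - cum_neg jumps i))"
  by (rule cum_pos_eq_SUP_reflection)
    (simp_all add: reflected_arrival_bounds reflected_arrival_at_lower)

lemma cum_neg_jumps_eq_SUP:
  "k \<le> m \<Longrightarrow> cum_neg jumps k
    = (SUP i\<in>{..k}. neg_part (ln (P 0 / \<gamma>) - ln (S (\<tau> i)) - cum_pos jumps i))"
  by (rule cum_neg_eq_SUP_reflection)
    (simp_all add: reflected_arrival_bounds reflected_arrival_at_upper)

end

theorem mainTheorem1: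
  fixes \<gamma> T :: real and S P :: "real \<Rightarrow> real" and \<tau> :: "nat \<Rightarrow> real" and m :: nat
  assumes gamma: "0 < \<gamma>" "\<gamma> < 1"
    and Spos: "\<forall>t\<ge>0. S t > 0"
    and Ppos: "\<forall>t\<ge>0. P t > 0"
    and tau0: "\<tau> 0 = 0"
    and tau_mono: "\<forall>i<m. \<tau> i < \<tau> (Suc i)"
    and tauT: "\<tau> m \<le> T"
    and Pconst: "\<forall>i<m. \<forall>t. \<tau> i \<le> t \<and> t < \<tau> (Suc i) \<longrightarrow> P t = P (\<tau> i)"
    and Pconst_last: "\<forall>t. \<tau> m \<le> t \<longrightarrow> P t = P (\<tau> m)"
    and update: "\<forall>i\<le>m. ln (S (\<tau> i)) - ln (P (\<tau> i)) = clampg \<gamma> (Zpre S P \<tau> i)"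
    and init: "\<gamma> * P 0 \<le> S 0" "S 0 \<le> P 0 / \<gamma>"
  shows "\<forall>t\<ge>0.
     ln (P t) = ln (P 0) + Uproc \<gamma> S P m \<tau> t - Lproc \<gamma> S P m \<tau> t
   \<and> ln (S t) - ln (P t) = ln (S t) - ln (P 0) + Lproc \<gamma> S P m \<tau> t - Uproc \<gamma> S P m \<tau> t
   \<and> Lproc \<gamma> S P m \<tau> t = (SUP i\<in>arrived m \<tau> t.
        neg_part (- ln (\<gamma> * P 0) + ln (S (\<tau> i)) - Uproc \<gamma> S P m \<tau> (\<tau> i)))
   \<and> Uproc \<gamma> S P m \<tau> t = (SUP i\<in>arrived m \<tau> t.
        neg_part (ln (P 0 / \<gamma>) - ln (S (\<tau> i)) - Lproc \<gamma> S P m \<tau> (\<tau> i)))"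
proof (intro allI impI, goal_cases)
  case (1 t)
  \<comment> \<open>init follows from update at i = 0.\<close>
  interpret arbitraged_pool \<gamma> S P \<tau> m
    using gamma Ppos tau0 update by unfold_locales auto
  have "\<tau> 0 \<le> t"
    using tau0 \<open>0 \<le> t\<close> by simp
  then obtain k where k: "k \<le> m" "\<tau> k \<le> t" "k < m \<Longrightarrow> t < \<tau> (Suc k)"
    using last_arrival_exists[where m = m] by metis
  have P_t: "P t = P (\<tau> k)"
    using Pconst[rule_format, of k t] Pconst_last[rule_format, of t] k
    by (cases "k < m") simp_all
  have arrived_t: "arrived m \<tau> t = {..k}"
    using tau_mono k by (rule arrived_eq_atMost)
  have "arrived m \<tau> (\<tau> i) = {..i}" if "i \<le> m" for i
    using tau_mono that by (intro arrived_eq_atMost) auto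
  then have at_arrival: "Lproc \<gamma> S P m \<tau> (\<tau> i) = cum_pos jumps i"
    "Uproc \<gamma> S P m \<tau> (\<tau> i) = cum_neg jumps i" if "i \<le> k" for i
    using that k(1) by (simp_all add: Lproc_def Uproc_def cum_pos_def cum_neg_def)
  have "Lproc \<gamma> S P m \<tau> t = cum_pos jumps k" "Uproc \<gamma> S P m \<tau> t = cum_neg jumps k"
    by (simp_all add: Lproc_def Uproc_def cum_pos_def cum_neg_def arrived_t)
  then show ?case
    using ln_P_arrival[OF k(1)] cum_pos_jumps_eq_SUP[OF k(1)] cum_neg_jumps_eq_SUP[OF k(1)]
    by (simp add: P_t arrived_t at_arrival cong: SUP_cong_simp)
qed

end
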